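(* Let $A$ be a local integral domain with infinite residue field and suppose $A^\times=(A^\times)^2$. Then $\mathcal{RB}_0(A)[\tfrac12]=0$ and $\mathcal{RB}(A)[\tfrac12]\cong\mathcal B(A)[\tfrac12]$.
   Context: For a commutative ring $A$: $A^\times$ units; $G_A=A^\times/(A^\times)^2$, $\langle x\rangle$ the class of $x$; $\mathcal R_A=\mathbb Z[G_A]$; $\langle\langle x\rangle\rangle=\langle x\rangle-1$; $\mathcal I_A$ the augmentation ideal; $W_A=\{u\in A^\times:1-u\in A^\times\}$; $M[\tfrac12]=M\otimes\mathbb Z[\tfrac12]$. $\mathcal{RP}(A)$ is the $\mathcal R_A$-module generated by $[x]$, $x\in W_A$, with relations $[x]-[y]+\langle x\rangle[y/x]-\langle x^{-1}-1\rangle\left[\frac{1-x^{-1}}{1-y^{-1}}\right]+\langle 1-x\rangle\left[\frac{1-x}{1-y}\right]=0$ ($x,y,y/x\in W_A$); $\mathcal P(A)=\mathcal{RP}(A)_{G_A}$. With $\tilde S^2(A^\times)=(A^\times\otimes A^\times)/\langle x\otimes y+y\otimes x\rangle$, $\lambda:\mathcal P(A)\to\tilde S^2(A^\times)$, $[x]\mapsto (1-x)\circ x$, $\mathcal B(A)=\ker\lambda$; $\lambda_1:\mathcal{RP}(A)\to\mathcal I_A^2$, $[x]\mapsto\langle\langle1-x\rangle\rangle\langle\langle x\rangle\rangle$; $\lambda_2=\lambda\circ(\mathcal{RP}(A)\to\mathcal P(A))$; $\mathcal{RB}(A)=\ker\lambda_1\cap\ker\lambda_2$; $\mathcal{RB}_0(A)=\ker(\mathcal{RB}(A)\to\mathcal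 B(A))$. *)

theory Defs
  imports Main
begin

section \<open>Free abelian groups as finitely supported integer-valued functions\<close>

definition fsupp :: "('x \<Rightarrow> int) \<Rightarrow> 'x set" where
  "fsupp f = {x. f x \<noteq> 0}"

definition delta :: "'x \<Rightarrow> 'x \<Rightarrow> int" where
  "delta x = (\<lambda>y. if y = x then 1 else 0)"

definition freeab :: "'x set \<Rightarrow> ('x \<Rightarrow> int) set" where
  "freeab X = {f. finite (fsupp f) \<and> fsupp f \<subseteq> X}"

definition lin :: "('x \<Rightarrow> 'y \<Rightarrow> int) \<Rightarrow> ('x \<Rightarrow> int) \<Rightarrow> ('y \<Rightarrow> int)" where
  "lin \<phi> f = (\<lambda>z. \<Sum>x\<in>fsupp f. f x * \<phi> x z)"

inductive_set zspan :: "('x \<Rightarrow> int) set \<Rightarrow> ('x \<Rightarrow> int) set" for S where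
  zero: "(\<lambda>_. 0) \<in> zspan S"
| gen: "s \<in> S \<Longrightarrow> s \<in> zspan S"
| diff: "a \<in> zspan S \<Longrightarrow> b \<in> zspan S \<Longrightarrow> (\<lambda>z. a z - b z) \<in> zspan S"

definition unitsA :: "'a::idom set" where
  "unitsA = {u. u dvd 1}"

definition WA :: "'a::idom set" where
  "WA = {u. u dvd 1 \<and> (1 - u) dvd 1}"

definition sqcl :: "'a::idom \<Rightarrow> 'a set" where
  "sqcl u = {v. \<exists>w. w dvd 1 \<and> v = u * w * w}"

definition GA :: "'a::idom set set" where
  "GA = sqcl ` unitsA"

definition cmul :: "'a::idom set \<Rightarrow> 'a set \<Rightarrow> 'a set" where
  "cmul g h = {a * b | a b. a \<in> g \<and> b \<in> h}"

definition local_domain :: "'a::idom itself \<Rightarrow> bool" where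
  "local_domain _ \<longleftrightarrow> (\<forall>x y::'a. \<not> x dvd 1 \<longrightarrow> \<not> y dvd 1 \<longrightarrow> \<not> (x + y) dvd 1)"

text \<open>Residue field A/m, m = non-units: its elements are the classes x + m.\<close>
definition residue_classes :: "'a::idom set set" where
  "residue_classes = range (\<lambda>x. {y. \<not> (x - y) dvd 1})"

section \<open>RP(A): free abelian group on G_A \<times> W_A (the symbols g[x]) modulo
  the Z-span of all G_A-translates of the defining relations\<close>

definition FRP :: "('a::idom set \<times> 'a \<Rightarrow> int) set" where
  "FRP = freeab (GA \<times> WA)"

text \<open>g times the defining relation for x, y; here x' = x^-1, y' = y^-1, q = y/x,
  a = (1-x^-1)/(1-y^-1), b = (1-x)/(1-y) (uniquely determined in a domain).\<close>
definition RP_rels :: "('a::idom set \<times> 'a \<Rightarrow> int) set" where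
  "RP_rels = {(\<lambda>z. delta (g, x) z - delta (g, y) z + delta (cmul g (sqcl x), q) z
        - delta (cmul g (sqcl (x' - 1)), a) z + delta (cmul g (sqcl (1 - x)), b) z)
     | g x y x' y' q a b. g \<in> GA \<and> x \<in> WA \<and> y \<in> WA \<and> q \<in> WA \<and>
        x * x' = 1 \<and> y * y' = 1 \<and> x * q = y \<and> (1 - y') * a = 1 - x' \<and> (1 - y) * b = 1 - x}"

definition KRP :: "('a::idom set \<times> 'a \<Rightarrow> int) set" where
  "KRP = zspan RP_rels"

text \<open>P(A) = RP(A)_{G_A}: additionally kill (g - 1) times generators.\<close>
definition coinv_rels :: "('a::idom set \<times> 'a \<Rightarrow> int) set" where
  "coinv_rels = {(\<lambda>z. delta (cmul g h, x) z - delta (h, x) z) | g h x. g \<in> GA \<and> h \<in> GA \<and> x \<in> WA}"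

definition KP :: "('a::idom set \<times> 'a \<Rightarrow> int) set" where
  "KP = zspan (RP_rels \<union> coinv_rels)"

section \<open>Symmetric square: A^x \<otimes> A^x modulo x\<otimes>y + y\<otimes>x, as free group on pairs modulo relations\<close>

definition S2_rels :: "('a::idom \<times> 'a \<Rightarrow> int) set" where
  "S2_rels =
     {(\<lambda>z. delta (u * u', v) z - delta (u, v) z - delta (u', v) z) | u u' v.
         u dvd 1 \<and> u' dvd 1 \<and> v dvd 1}
   \<union> {(\<lambda>z. delta (u, v * v') z - delta (u, v) z - delta (u, v') z) | u v v'.
         u dvd 1 \<and> v dvd 1 \<and> v' dvd 1}
   \<union> {(\<lambda>z. delta (u, v) z + delta (v, u) z) | u v. u dvd 1 \<and> v dvd 1}"

definition KS2 :: "('a::idom \<times> 'a \<Rightarrow> int) set" where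
  "KS2 = zspan S2_rels"

text \<open>lambda_2 = lambda o (RP -> P): g[x] maps to (1-x) \<circ> x.\<close>
definition lam2 :: "('a::idom set \<times> 'a \<Rightarrow> int) \<Rightarrow> ('a \<times> 'a \<Rightarrow> int)" where
  "lam2 = lin (\<lambda>(g, x). delta (1 - x, x))"

text \<open>lambda_1 : g[x] maps to g <<1-x>> <<x>> in Z[G_A].\<close>
definition lam1 :: "('a::idom set \<times> 'a \<Rightarrow> int) \<Rightarrow> ('a set \<Rightarrow> int)" where
  "lam1 = lin (\<lambda>(g, x). \<lambda>z. delta (cmul g (cmul (sqcl (1 - x)) (sqcl x))) z
                          - delta (cmul g (sqcl (1 - x))) z - delta (cmul g (sqcl x)) z + delta g z)"

text \<open>Representatives of RB(A) (in RP(A)) and of B(A) (in P(A)).\<close>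
definition RB_reps :: "('a::idom set \<times> 'a \<Rightarrow> int) set" where
  "RB_reps = {f \<in> FRP. lam1 f = (\<lambda>_. 0) \<and> lam2 f \<in> KS2}"

definition B_reps :: "('a::idom set \<times> 'a \<Rightarrow> int) set" where
  "B_reps = {f \<in> FRP. lam2 f \<in> KS2}"

end

theory Submission
  imports Defs
begin

text \<open>When every unit is a square, the square class group G_A is trivial. The coinvariance
  relations then vanish, so P(A) = RP(A), and lambda_1 vanishes identically, so RB(A) = B(A).
  Both claims therefore hold with exponent 0.\<close>

lemma unit_mult: "(a::'a::comm_semiring_1) dvd 1 \<Longrightarrow> b dvd 1 \<Longrightarrow> a * b dvd 1"
  using mult_dvd_mono[of a 1 b 1] by simp

lemma zspan_subset_zspan:
  assumes "T \<subseteq> zspan S"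
  shows "zspan T \<subseteq> zspan S"
proof
  fix f assume "f \<in> zspan T"
  then show "f \<in> zspan S"
    by induction (use assms in \<open>auto intro: zspan.intros\<close>)
qed

lemma cmul_unitsA: "cmul (unitsA :: 'a::idom set) unitsA = unitsA"
proof
  show "cmul (unitsA :: 'a set) unitsA \<subseteq> unitsA"
    by (auto simp: cmul_def unitsA_def intro: unit_mult)
  show "unitsA \<subseteq> cmul (unitsA :: 'a set) unitsA"
    unfolding cmul_def unitsA_def by force
qed

context
  assumes units_square: "\<forall>u::'a::idom. u dvd 1 \<longrightarrow> (\<exists>w. w dvd 1 \<and> u = w * w)"
begin

lemma sqcl_eq_unitsA:
  assumes u: "(u::'a) dvd 1"
  shows "sqcl u = unitsA"
proof
  show "sqcl u \<subseteq> unitsA"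
    using u by (auto simp: sqcl_def unitsA_def intro!: unit_mult)
  show "unitsA \<subseteq> sqcl u"
  proof
    fix v assume "v \<in> (unitsA :: 'a set)"
    then have v: "v dvd 1" by (simp add: unitsA_def)
    obtain u' where u': "u * u' = 1" using u by (metis dvd_def)
    then have "u' dvd 1" by (metis dvd_triv_right)
    then have "(v * u') dvd 1" by (rule unit_mult[OF v])
    then obtain w where w: "w dvd 1" "v * u' = w * w" using units_square by blast
    have "v = u * w * w" using u' w(2)
      by (metis mult.assoc mult.commute mult_1_left)
    then show "v \<in> sqcl u" using w(1) by (auto simp: sqcl_def)
  qed
qed

lemma GA_eq_singleton: "(GA :: 'a set set) = {unitsA}"
proof -
  have "sqcl ` unitsA = {unitsA :: 'a set}"
  proof
    show "sqcl ` unitsA \<subseteq> {unitsA :: 'a set}"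
      by (auto simp: unitsA_def sqcl_eq_unitsA)
    have "(1::'a) \<in> unitsA" "sqcl (1::'a) = unitsA"
      by (simp_all add: unitsA_def sqcl_eq_unitsA)
    then show "{unitsA :: 'a set} \<subseteq> sqcl ` unitsA" by blast
  qed
  then show ?thesis by (simp add: GA_def)
qed

lemma KP_eq_KRP: "(KP :: ('a set \<times> 'a \<Rightarrow> int) set) = KRP"
proof
  have "coinv_rels \<subseteq> ({\<lambda>_. 0} :: ('a set \<times> 'a \<Rightarrow> int) set)"
    by (auto simp: coinv_rels_def GA_eq_singleton cmul_unitsA)
  then have "RP_rels \<union> coinv_rels \<subseteq> zspan (RP_rels :: ('a set \<times> 'a \<Rightarrow> int) set)"
    by (auto intro: zspan.intros)
  then show "(KP :: ('a set \<times> 'a \<Rightarrow> int) set) \<subseteq> KRP"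
    unfolding KP_def KRP_def by (rule zspan_subset_zspan)
  show "(KRP :: ('a set \<times> 'a \<Rightarrow> int) set) \<subseteq> KP"
    unfolding KP_def KRP_def by (rule zspan_subset_zspan) (auto intro: zspan.gen)
qed

lemma lam1_eq_zero:
  assumes "(f :: 'a set \<times> 'a \<Rightarrow> int) \<in> FRP"
  shows "lam1 f = (\<lambda>_. 0)"
proof -
  have "(case p of (g, x) \<Rightarrow> \<lambda>z. delta (cmul g (cmul (sqcl (1 - x)) (sqcl x))) z
      - delta (cmul g (sqcl (1 - x))) z - delta (cmul g (sqcl x)) z + delta g z) = (\<lambda>_. 0)"
    if p: "p \<in> fsupp f" for p
  proof -
    obtain x where "p = (unitsA, x)" "x dvd 1" "(1 - x) dvd 1"
      using assms p by (cases p) (auto simp: FRP_def freeab_def GA_eq_singleton WA_def)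
    then show ?thesis by (simp add: sqcl_eq_unitsA cmul_unitsA)
  qed
  then show ?thesis
    by (simp add: lam1_def lin_def)
qed

lemma RB_reps_eq_B_reps: "(RB_reps :: ('a set \<times> 'a \<Rightarrow> int) set) = B_reps"
  by (auto simp: RB_reps_def B_reps_def lam1_eq_zero)

end

theorem mainTheorem3:
  assumes loc: "local_domain TYPE('a::idom)"
    and inf_res: "infinite (residue_classes :: 'a set set)"
    and squares: "\<forall>u::'a. u dvd 1 \<longrightarrow> (\<exists>w. w dvd 1 \<and> u = w * w)"
  shows "(\<forall>f \<in> (RB_reps :: ('a set \<times> 'a \<Rightarrow> int) set).
            f \<in> KP \<longrightarrow> (\<exists>n::nat. (\<lambda>z. 2 ^ n * f z) \<in> KRP))
       \<and> (\<forall>h \<in> (B_reps :: ('a set \<times> 'a \<Rightarrow> int) set).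
            \<exists>n::nat. \<exists>f \<in> RB_reps. (\<lambda>z. 2 ^ n * h z - f z) \<in> KP)"
proof (intro conjI ballI impI)
  fix f :: "'a set \<times> 'a \<Rightarrow> int"
  assume "f \<in> KP"
  then have "(\<lambda>z. 2 ^ 0 * f z) \<in> KRP" using KP_eq_KRP[OF squares] by simp
  then show "\<exists>n::nat. (\<lambda>z. 2 ^ n * f z) \<in> KRP" ..
next
  fix h :: "'a set \<times> 'a \<Rightarrow> int"
  assume "h \<in> B_reps"
  then have "h \<in> RB_reps" using RB_reps_eq_B_reps[OF squares] by simp
  moreover have "(\<lambda>z. 2 ^ 0 * h z - h z) \<in> KP"
    by (simp add: KP_def zspan.zero)
  ultimately show "\<exists>n::nat. \<exists>f \<in> RB_reps. (\<lambda>z. 2 ^ n * h z - f z) \<in> KP" by blast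
qed

end
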